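(* Let $G=(V,E,\omega)$ be a weighted directed graph with $V=\{1,\dots,n\}$, let $\lambda_0\in\mathbb{C}$ be an eigenvalue of $M_G$ and let $u=(u_1,\dots,u_n)\in\mathbb{C}^n$ satisfy $M_G u=\lambda_0 u$, $u\neq 0$. Assume that $S=\{m+1,\dots,n\}$ is a $\lambda_0$-structural set of $G$. Then $\lambda_0$ is an eigenvalue of the reduced matrix $R_S(G,\lambda_0)$, and $R_S(G,\lambda_0)\,u_S=\lambda_0\,u_S$, where $u_S=(u_{m+1},\dots,u_n)$ is the restriction of $u$ to $S$.
   Context: Let $G=(V,E,\omega)$ be a weighted directed graph with vertex set $V=\{1,\dots,n\}$, edge set $E\subset V\times V$ and weight function $\omega:E\to\mathbb{C}$; set $\omega(i,j)=0$ whenever $(i,j)\notin E$. Its weighted adjacency matrix is $M_G=(\omega(i,j))_{i,j\in V}$ (acting on column vectors, so $(M_Gu)_i=\sum_j\omega(i,j)u_j$). A path is a sequence $(i_0,\dots,i_p)$ with $p\ge 1$ and $(i_\ell,i_{\ell+1})\in E$ for $0\le \ell\le p-1$, whose vertices are pairwise distinct except that possibly $i_0=i_p$; if $i_0=i_p$ the path is a cycle, and a cycle with $p=1$ is a loop. For $S\subset V$ write $\overline S=V\setminus S$. Given $\lambda\in\mathbb{C}$, a nonempty set $S\subset V$ is a $\lambda$-structural set of $G$ if (i) every cycle of $G$ that is not a loop contains a vertex of $S$, and (ii) $\omega(i,i)\neq\lambda$ for every $i\in\overline S$. A branch of $(G,S)$ is a path $\beta=(i_0,i_1,\dots,i_p)$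 whose interior vertices $i_1,\dots,i_{p-1}$ all lie in $\overline S$; $\mathscr B_{ij}$ denotes the set of branches with $i_0=i$ and $i_p=j$. The weight of a branch is $\omega(\beta,\lambda)=\omega(i_0,i_1)\prod_{\ell=1}^{p-1}\frac{\omega(i_\ell,i_{\ell+1})}{\lambda-\omega(i_\ell,i_\ell)}$. For $i,j\in S$ set $R_{ij}(G,S,\lambda)=\sum_{\beta\in\mathscr B_{ij}}\omega(\beta,\lambda)$; the reduced matrix $R_S(G,\lambda)$ is the $S\times S$ matrix with entries $R_{ij}(G,S,\lambda)$, $i,j\in S$. *)

theory Defs
  imports Complex_Main
begin

definition wgraph :: "nat \<Rightarrow> (nat \<times> nat) set \<Rightarrow> (nat \<Rightarrow> nat \<Rightarrow> complex) \<Rightarrow> bool" where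
  "wgraph n E w \<longleftrightarrow> E \<subseteq> {1..n} \<times> {1..n} \<and> (\<forall>i j. (i, j) \<notin> E \<longrightarrow> w i j = 0)"

definition is_path :: "(nat \<times> nat) set \<Rightarrow> nat list \<Rightarrow> bool" where
  "is_path E xs \<longleftrightarrow> length xs \<ge> 2 \<and>
     (\<forall>k. Suc k < length xs \<longrightarrow> (xs ! k, xs ! Suc k) \<in> E) \<and>
     distinct (butlast xs) \<and> distinct (tl xs)"

definition is_cycle :: "(nat \<times> nat) set \<Rightarrow> nat list \<Rightarrow> bool" where
  "is_cycle E xs \<longleftrightarrow> is_path E xs \<and> hd xs = last xs"

definition is_loop :: "(nat \<times> nat) set \<Rightarrow> nat list \<Rightarrow> bool" where
  "is_loop E xs \<longleftrightarrow> is_cycle E xs \<and> length xs = 2"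

definition structural_set ::
  "nat \<Rightarrow> (nat \<times> nat) set \<Rightarrow> (nat \<Rightarrow> nat \<Rightarrow> complex) \<Rightarrow> complex \<Rightarrow> nat set \<Rightarrow> bool" where
  "structural_set n E w lam S \<longleftrightarrow> S \<noteq> {} \<and> S \<subseteq> {1..n} \<and>
     (\<forall>xs. is_cycle E xs \<and> \<not> is_loop E xs \<longrightarrow> (\<exists>v\<in>set xs. v \<in> S)) \<and>
     (\<forall>i\<in>{1..n} - S. w i i \<noteq> lam)"

definition is_branch :: "(nat \<times> nat) set \<Rightarrow> nat set \<Rightarrow> nat list \<Rightarrow> bool" where
  "is_branch E S xs \<longleftrightarrow> is_path E xs \<and> (\<forall>k. 0 < k \<and> k < length xs - 1 \<longrightarrow> xs ! k \<notin> S)"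

definition branches :: "(nat \<times> nat) set \<Rightarrow> nat set \<Rightarrow> nat \<Rightarrow> nat \<Rightarrow> nat list set" where
  "branches E S i j = {xs. is_branch E S xs \<and> hd xs = i \<and> last xs = j}"

definition branch_weight :: "(nat \<Rightarrow> nat \<Rightarrow> complex) \<Rightarrow> complex \<Rightarrow> nat list \<Rightarrow> complex" where
  "branch_weight w lam xs = w (xs ! 0) (xs ! 1) *
     (\<Prod>l\<in>{1..<length xs - 1}. w (xs ! l) (xs ! Suc l) / (lam - w (xs ! l) (xs ! l)))"

definition reduced_entry ::
  "(nat \<times> nat) set \<Rightarrow> (nat \<Rightarrow> nat \<Rightarrow> complex) \<Rightarrow> nat set \<Rightarrow> complex \<Rightarrow> nat \<Rightarrow> nat \<Rightarrow> complex" where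
  "reduced_entry E w S lam i j = (\<Sum>xs\<in>branches E S i j. branch_weight w lam xs)"

end

(*
  Write T for the vertices outside S. Since w t t \<noteq> \<lambda> for t \<in> T, the eigen-equation at t can be
  solved for u t in terms of the other entries. Starting from \<lambda> u i = \<Sum>j w i j u j at i \<in> S and
  substituting these expressions for the entries at vertices of T, every term corresponds to a walk
  from i through T into S and carries exactly its branch weight. As every cycle that is not a loop
  meets S, no walk through T can step back to a vertex it has visited, so the substitution stops
  after at most |T| steps, and what remains is \<Sum>j\<in>S R i j u j.
  The same acyclicity gives u \<noteq> 0 on S: otherwise a nonzero entry of u on T would propagate
  along an arbitrarily long simple walk in T.
*)
theory Submission
  imports Defs
begin

abbreviation walk :: "(nat \<times> nat) set \<Rightarrow> nat list \<Rightarrow> bool" where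
  "walk E \<equiv> successively (\<lambda>x y. (x, y) \<in> E)"

lemma is_path_iff_walk:
  "is_path E xs \<longleftrightarrow> 2 \<le> length xs \<and> walk E xs \<and> distinct (butlast xs) \<and> distinct (tl xs)"
  by (auto simp: is_path_def successively_conv_nth)

lemma walk_in_Field: "walk E xs \<Longrightarrow> 2 \<le> length xs \<Longrightarrow> set xs \<subseteq> Field E"
  by (induction "\<lambda>x y. (x, y) \<in> E" xs rule: successively.induct)
    (auto intro: FieldI1 FieldI2 simp: Suc_le_eq dest: length_pos_if_in_set)

lemma path_length_le:
  assumes "is_path E xs" "set xs \<subseteq> A" "finite A"
  shows "length xs \<le> Suc (card A)"
proof -
  have "length (tl xs) = card (set (tl xs))"
    using assms(1) by (simp add: is_path_def distinct_card)
  also have "\<dots> \<le> card A"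
  proof (rule card_mono)
    show "set (tl xs) \<subseteq> A" using assms(2) by (cases xs) auto
  qed (rule assms(3))
  finally show ?thesis by simp
qed

lemma finite_paths:
  assumes "finite E" shows "finite {xs. is_path E xs}"
proof (rule finite_subset)
  have "finite (Field E)" using assms by (simp add: finite_Field)
  show "{xs. is_path E xs} \<subseteq> {xs. set xs \<subseteq> Field E \<and> length xs \<le> Suc (card (Field E))}"
    using walk_in_Field path_length_le \<open>finite (Field E)\<close> by (fastforce simp: is_path_iff_walk)
  show "finite \<dots>" using \<open>finite (Field E)\<close> by (rule finite_lists_length_le)
qed

lemma branch_weight_pair [simp]: "branch_weight w lam [i, j] = w i j"
  by (simp add: branch_weight_def)

lemma branch_weight_snoc:
  assumes "2 \<le> length p"
  shows "branch_weight w lam (p @ [j]) =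
    branch_weight w lam p * (w (last p) j / (lam - w (last p) (last p)))"
proof -
  obtain b where b: "length p = Suc (Suc b)" using assms by (metis add_2_eq_Suc le_Suc_ex)
  have "last p = p ! Suc b" using b by (metis last_conv_nth list.size(3) nat.distinct(1) diff_Suc_1)
  moreover have
    "(\<Prod>l\<in>{1..<b}. w ((p @ [j]) ! l) ((p @ [j]) ! Suc l) / (lam - w ((p @ [j]) ! l) ((p @ [j]) ! l))) =
     (\<Prod>l\<in>{1..<b}. w (p ! l) (p ! Suc l) / (lam - w (p ! l) (p ! l)))"
    using b by (intro prod.cong) (auto simp: nth_append)
  ultimately show ?thesis using b
    by (simp add: branch_weight_def prod.atLeastLessThan_Suc nth_append mult.assoc)
qed

lemma branch_weight_snoc_eq_0:
  assumes "p \<noteq> []" "w (last p) j = 0"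
  shows "branch_weight w lam (p @ [j]) = 0"
proof (cases "2 \<le> length p")
  case True
  then show ?thesis using assms(2) by (simp add: branch_weight_snoc)
next
  case False
  then obtain i where "p = [i]" using assms(1) by (cases p rule: remdups_adj.cases) auto
  then show ?thesis using assms(2) by simp
qed

locale structural_graph =
  fixes n :: nat and E :: "(nat \<times> nat) set" and w :: "nat \<Rightarrow> nat \<Rightarrow> complex"
    and lam :: complex and S :: "nat set"
  assumes wgraph: "wgraph n E w"
    and structural: "structural_set n E w lam S"
begin

abbreviation T :: "nat set" where "T \<equiv> {1..n} - S"

lemma edge_in_vertices: "(i, j) \<in> E \<Longrightarrow> i \<in> {1..n} \<and> j \<in> {1..n}"
  using wgraph by (auto simp: wgraph_def)

lemma weight_non_edge: "(i, j) \<notin> E \<Longrightarrow> w i j = 0"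
  using wgraph by (simp add: wgraph_def)

lemma S_subset: "S \<subseteq> {1..n}"
  using structural by (simp add: structural_set_def)

lemma diag_weight_ne: "t \<in> T \<Longrightarrow> w t t \<noteq> lam"
  using structural by (simp add: structural_set_def)

lemma finite_E: "finite E"
  using wgraph finite_subset[of E "{1..n} \<times> {1..n}"] by (simp add: wgraph_def)

text \<open>Closing a simple walk in T by an edge back to one of its vertices would give a cycle that is
  not a loop and misses S.\<close>
lemma no_back_edge:
  assumes "set q \<subseteq> T" "distinct q" "walk E q" "(last q, j) \<in> E" "j \<in> set q" "j \<noteq> last q"
  shows False
proof -
  obtain xs ys where q: "q = xs @ j # ys" using assms(5) by (meson split_list)
  have "ys \<noteq> []" using q assms(6) by auto
  define c where "c = j # ys @ [j]"
  have "walk E (j # ys)" using assms(3) q by (simp add: successively_append_iff)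
  then have "walk E ((j # ys) @ [j])"
    using assms(4) q \<open>ys \<noteq> []\<close> by (subst successively_append_iff) simp
  then have "walk E c" by (simp add: c_def)
  moreover have "j \<notin> set ys" "distinct ys" using assms(2) q by auto
  ultimately have "is_cycle E c" "\<not> is_loop E c"
    using \<open>ys \<noteq> []\<close> by (auto simp: c_def is_cycle_def is_loop_def is_path_iff_walk butlast_append)
  moreover have "set c \<inter> S = {}" using assms(1) q by (auto simp: c_def)
  ultimately show False using structural by (auto simp: structural_set_def)
qed

definition branch_prefix :: "nat list \<Rightarrow> bool" where
  "branch_prefix p \<longleftrightarrow> p \<noteq> [] \<and> hd p \<in> S \<and> set (tl p) \<subseteq> T \<and> distinct p \<and> walk E p"

definition completions :: "nat list \<Rightarrow> nat list set" where
  "completions p = {xs. is_branch E S xs \<and> last xs \<in> S \<and> (\<exists>ys. ys \<noteq> [] \<and> xs = p @ ys)}"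

lemma finite_completions: "finite (completions p)"
  by (rule finite_subset[OF _ finite_paths[OF finite_E]]) (auto simp: completions_def is_branch_def)

lemma completion_next_edge:
  assumes "xs \<in> completions p" "p \<noteq> []"
  shows "(last p, xs ! length p) \<in> E"
proof -
  obtain ys where "ys \<noteq> []" "xs = p @ ys" "walk E xs"
    using assms(1) by (auto simp: completions_def is_branch_def is_path_iff_walk)
  then show ?thesis using assms(2) by (simp add: successively_append_iff nth_append hd_conv_nth)
qed

lemma completion_decomp:
  assumes "xs \<in> completions p" shows "xs = p @ xs ! length p # drop (Suc (length p)) xs"
proof -
  obtain ys where "ys \<noteq> []" "xs = p @ ys" using assms by (auto simp: completions_def)
  then show ?thesis by (cases ys) auto
qed

lemma completions_snoc_subset: "completions (p @ [j]) \<subseteq> {xs \<in> completions p. xs ! length p = j}"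
  by (auto simp: completions_def)

lemma completions_snoc_repeat:
  assumes "j \<in> set (tl p)" shows "completions (p @ [j]) = {}"
proof -
  have "\<not> distinct (tl p @ j # ys)" for ys using assms by simp
  moreover have "p \<noteq> []" using assms by auto
  ultimately show ?thesis
    by (auto simp: completions_def is_branch_def is_path_def simp del: distinct_append)
qed

lemma completions_snoc_outside:
  assumes "j \<notin> S" shows "completions (p @ [j]) = {xs \<in> completions p. xs ! length p = j}"
proof
  show "{xs \<in> completions p. xs ! length p = j} \<subseteq> completions (p @ [j])"
  proof
    fix xs assume xs_in: "xs \<in> {xs \<in> completions p. xs ! length p = j}"
    then obtain ys where "xs = p @ j # ys" using completion_decomp by blast
    with xs_in have xs: "xs = p @ j # ys" "last xs \<in> S" "xs \<in> completions p"
      by (auto simp: completions_def)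
    then have "ys \<noteq> []" using assms by auto
    then show "xs \<in> completions (p @ [j])" using xs by (auto simp: completions_def)
  qed
qed (rule completions_snoc_subset)

lemma completions_snoc_in_S:
  assumes "branch_prefix p" "j \<in> S"
  shows "{xs \<in> completions p. xs ! length p = j} = (if (last p, j) \<in> E then {p @ [j]} else {})"
proof -
  have p: "p \<noteq> []" "set (tl p) \<subseteq> T" "distinct p" "walk E p"
    using assms(1) by (auto simp: branch_prefix_def)
  have "xs = p @ [j]" if xs_in: "xs \<in> completions p" and next_j: "xs ! length p = j" for xs
  proof -
    obtain ys where xs: "xs = p @ j # ys" "is_branch E S xs"
      using xs_in next_j completion_decomp[OF xs_in] by (auto simp: completions_def)
    have "ys = []"
    proof (rule ccontr)
      assume "ys \<noteq> []"
      then have "xs ! length p \<notin> S" using xs p(1) by (auto simp: is_branch_def)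
      then show False using xs assms(2) by simp
    qed
    then show ?thesis using xs by simp
  qed
  moreover have "p @ [j] \<in> completions p" if "(last p, j) \<in> E"
  proof -
    have "is_path E (p @ [j])"
      using p that assms(2)
      by (auto simp: is_path_iff_walk successively_append_iff Suc_le_eq distinct_tl)
    moreover have "(p @ [j]) ! k \<notin> S" if "0 < k" "k < length p" for k
    proof -
      have "(p @ [j]) ! k = tl p ! (k - 1)" using that by (simp add: nth_append nth_tl)
      moreover have "tl p ! (k - 1) \<in> set (tl p)" using that by (intro nth_mem) simp
      ultimately show ?thesis using p(2) by auto
    qed
    ultimately show ?thesis using assms(2) by (auto simp: completions_def is_branch_def)
  qed
  ultimately show ?thesis using completion_next_edge p(1) by fastforce
qed

lemma branch_prefix_snoc:
  "branch_prefix p \<Longrightarrow> j \<in> T \<Longrightarrow> j \<notin> set p \<Longrightarrow> (last p, j) \<in> E \<Longrightarrow> branch_prefix (p @ [j])"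
  by (auto simp: branch_prefix_def successively_append_iff)

lemma branch_prefix_length: "branch_prefix p \<Longrightarrow> length (tl p) \<le> card T"
  unfolding branch_prefix_def
  by (metis distinct_card distinct_tl card_mono finite_Diff finite_atLeastAtMost)

end

locale structural_eigenvector = structural_graph +
  fixes u :: "nat \<Rightarrow> complex"
  assumes eigen: "\<forall>i\<in>{1..n}. (\<Sum>j=1..n. w i j * u j) = lam * u i"
begin

abbreviation branch_term :: "nat list \<Rightarrow> complex" where
  "branch_term xs \<equiv> branch_weight w lam xs * u (last xs)"

lemma off_diagonal_balance:
  assumes "t \<in> {1..n}" shows "(\<Sum>j\<in>{1..n} - {t}. w t j * u j) = (lam - w t t) * u t"
proof -
  have "(\<Sum>j=1..n. w t j * u j) = w t t * u t + (\<Sum>j\<in>{1..n} - {t}. w t j * u j)"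
    using assms by (simp add: sum.remove)
  then show ?thesis using eigen assms by (simp add: algebra_simps)
qed

lemma sum_completions_split:
  assumes p: "branch_prefix p"
    and IH: "\<And>j. j \<in> T \<Longrightarrow> branch_prefix (p @ [j]) \<Longrightarrow>
               branch_term (p @ [j]) = (\<Sum>xs\<in>completions (p @ [j]). branch_term xs)"
  shows "(\<Sum>xs\<in>completions p. branch_term xs) =
    (\<Sum>j\<in>{1..n} - set (tl p). branch_weight w lam (p @ [j]) * u j)"
proof -
  let ?fibre = "\<lambda>j. {xs \<in> completions p. xs ! length p = j}"
  have p_ne: "p \<noteq> []" and tl_T: "set (tl p) \<subseteq> T" and hd_S: "hd p \<in> S"
    using p by (auto simp: branch_prefix_def)
  have fibre_term: "(\<Sum>xs\<in>?fibre j. branch_term xs) = branch_weight w lam (p @ [j]) * u j"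
    if j: "j \<in> {1..n} - set (tl p)" for j
  proof (cases "(last p, j) \<in> E")
    case edge: True
    show ?thesis
    proof (cases "j \<in> S")
      case True
      then show ?thesis using edge completions_snoc_in_S[OF p] by simp
    next
      case False
      have "j \<notin> set p" using j hd_S False p_ne by (cases p) auto
      then have "branch_prefix (p @ [j])" using p j False edge by (intro branch_prefix_snoc) auto
      then show ?thesis using IH[of j] j False completions_snoc_outside[OF False] by simp
    qed
  next
    case False
    then have "?fibre j = {}"
      using completion_next_edge p_ne by blast
    moreover have "branch_weight w lam (p @ [j]) = 0"
      using False p_ne weight_non_edge by (simp add: branch_weight_snoc_eq_0)
    ultimately show ?thesis by (metis mult_zero_left sum.empty)
  qed
  have "(\<Sum>xs\<in>completions p. branch_term xs) = (\<Sum>j\<in>{1..n}. \<Sum>xs\<in>?fibre j. branch_term xs)"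
  proof (rule sum.group[symmetric])
    show "(\<lambda>xs. xs ! length p) ` completions p \<subseteq> {1..n}"
      using completion_next_edge[OF _ p_ne] edge_in_vertices by blast
  qed (simp_all add: finite_completions)
  also have "\<dots> = (\<Sum>j\<in>{1..n} - set (tl p). \<Sum>xs\<in>?fibre j. branch_term xs)"
  proof (rule sum.mono_neutral_right)
    show "\<forall>j\<in>{1..n} - ({1..n} - set (tl p)). (\<Sum>xs\<in>?fibre j. branch_term xs) = 0"
    proof
      fix j assume "j \<in> {1..n} - ({1..n} - set (tl p))"
      then have "j \<in> set (tl p)" "j \<notin> S" using tl_T by auto
      then have "?fibre j = {}" by (simp add: completions_snoc_repeat flip: completions_snoc_outside)
      then show "(\<Sum>xs\<in>?fibre j. branch_term xs) = 0" by (simp only: sum.empty)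
    qed
  qed auto
  also have "\<dots> = (\<Sum>j\<in>{1..n} - set (tl p). branch_weight w lam (p @ [j]) * u j)"
    using fibre_term by (rule sum.cong[OF refl])
  finally show ?thesis .
qed

lemma completion_expansion:
  "branch_prefix p \<Longrightarrow> 2 \<le> length p \<Longrightarrow> branch_term p = (\<Sum>xs\<in>completions p. branch_term xs)"
proof (induction "card T - length (tl p)" arbitrary: p rule: less_induct)
  case less
  let ?bw = "branch_weight w lam"
  define t where "t = last p"
  have tl_T: "set (tl p) \<subseteq> T" and tl_walk: "distinct (tl p)" "walk E (tl p)"
    using less.prems(1) successively_Cons[of _ "hd p" "tl p"]
    by (auto simp: branch_prefix_def distinct_tl)
  have "tl p \<noteq> []" using less.prems(2) by (cases p) auto
  then have last_tl: "last (tl p) = t" and t_tl: "t \<in> set (tl p)"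
    by (simp_all add: t_def last_tl) (metis last_in_set last_tl)
  then have "t \<in> T" using tl_T by blast
  then have t: "t \<in> {1..n}" "lam - w t t \<noteq> 0" using diag_weight_ne[of t] by auto
  have "(\<Sum>xs\<in>completions p. branch_term xs) = (\<Sum>j\<in>{1..n} - set (tl p). ?bw (p @ [j]) * u j)"
  proof (rule sum_completions_split[OF less.prems(1)])
    fix j assume prefix: "branch_prefix (p @ [j])"
    then have "card T - length (tl (p @ [j])) < card T - length (tl p)"
      using branch_prefix_length less.prems(2) by fastforce
    then show "branch_term (p @ [j]) = (\<Sum>xs\<in>completions (p @ [j]). branch_term xs)"
      using less.hyps[OF _ prefix] less.prems(2) by simp
  qed
  also have "\<dots> = (\<Sum>j\<in>{1..n} - {t}. ?bw (p @ [j]) * u j)"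
    \<comment> \<open>an edge from t back to an earlier vertex of p would close a cycle inside T\<close>
  proof (rule sum.mono_neutral_left)
    show "\<forall>j\<in>({1..n} - {t}) - ({1..n} - set (tl p)). ?bw (p @ [j]) * u j = 0"
    proof
      fix j assume "j \<in> ({1..n} - {t}) - ({1..n} - set (tl p))"
      then have "(t, j) \<notin> E"
        using no_back_edge[OF tl_T tl_walk] last_tl by auto
      then show "?bw (p @ [j]) * u j = 0"
        using weight_non_edge less.prems(2) by (simp add: branch_weight_snoc t_def)
    qed
  qed (use t_tl in auto)
  also have "\<dots> = ?bw p / (lam - w t t) * (\<Sum>j\<in>{1..n} - {t}. w t j * u j)"
    using less.prems(2) by (simp add: branch_weight_snoc sum_distrib_left t_def mult.assoc)
  also have "\<dots> = branch_term p"
    using off_diagonal_balance[OF t(1)] t(2) by (simp add: t_def)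
  finally show ?case ..
qed

lemma completions_singleton: "completions [i] = (\<Union>j\<in>S. branches E S i j)"
proof -
  have "xs = [i] @ tl xs \<and> tl xs \<noteq> []" if "is_branch E S xs" "hd xs = i" for xs
    using that by (cases xs) (auto simp: is_branch_def is_path_def)
  then show ?thesis by (auto simp: completions_def branches_def)
qed

lemma reduced_eigen_equation:
  assumes i: "i \<in> S"
  shows "(\<Sum>j\<in>S. reduced_entry E w S lam i j * u j) = lam * u i"
proof -
  have prefix: "branch_prefix [i]" using i by (simp add: branch_prefix_def)
  have "(\<Sum>j\<in>S. reduced_entry E w S lam i j * u j) =
      (\<Sum>j\<in>S. \<Sum>xs\<in>branches E S i j. branch_term xs)"
    by (simp add: reduced_entry_def sum_distrib_right branches_def)
  also have "\<dots> = (\<Sum>xs\<in>completions [i]. branch_term xs)"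
    unfolding completions_singleton
  proof (rule sum.UNION_disjoint[symmetric])
    show "finite S" using S_subset finite_subset by blast
    show "\<forall>j\<in>S. finite (branches E S i j)"
      using finite_completions[of "[i]"] by (auto simp: completions_singleton intro: finite_subset)
  qed (auto simp: branches_def)
  also have "\<dots> = (\<Sum>j\<in>{1..n} - set (tl [i]). branch_weight w lam ([i] @ [j]) * u j)"
  proof (rule sum_completions_split[OF prefix])
    fix j assume "branch_prefix ([i] @ [j])"
    then show "branch_term ([i] @ [j]) = (\<Sum>xs\<in>completions ([i] @ [j]). branch_term xs)"
      by (rule completion_expansion) simp
  qed
  also have "\<dots> = lam * u i"
    using eigen i S_subset by auto
  finally show ?thesis .
qed

lemma nonzero_successor:
  assumes "\<forall>i\<in>S. u i = 0" "t \<in> T" "u t \<noteq> 0"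
  shows "\<exists>j\<in>T. j \<noteq> t \<and> (t, j) \<in> E \<and> u j \<noteq> 0"
proof -
  have "t \<in> {1..n}" "lam - w t t \<noteq> 0" using assms(2) diag_weight_ne[OF assms(2)] by auto
  then have "(\<Sum>j\<in>{1..n} - {t}. w t j * u j) \<noteq> 0"
    using off_diagonal_balance assms(3) by simp
  then obtain j where j: "j \<in> {1..n} - {t}" "w t j * u j \<noteq> 0"
    by (meson sum.neutral)
  then have "(t, j) \<in> E" "u j \<noteq> 0" using weight_non_edge by force+
  then show ?thesis using assms(1) j(1) by blast
qed

lemma eigenvector_nonzero_on_S:
  assumes "\<exists>i\<in>{1..n}. u i \<noteq> 0" shows "\<exists>i\<in>S. u i \<noteq> 0"
proof (rule ccontr)
  assume "\<not> (\<exists>i\<in>S. u i \<noteq> 0)"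
  then have zero: "\<forall>i\<in>S. u i = 0" by simp
  have "\<exists>q. length q = Suc k \<and> set q \<subseteq> T \<and> distinct q \<and> walk E q \<and> u (last q) \<noteq> 0" for k
  proof (induction k)
    case 0
    obtain t where "t \<in> {1..n}" "u t \<noteq> 0" using assms by blast
    then show ?case using zero by (intro exI[of _ "[t]"]) auto
  next
    case (Suc k)
    then obtain q where q: "length q = Suc k" "set q \<subseteq> T" "distinct q" "walk E q" "u (last q) \<noteq> 0"
      by blast
    then have "q \<noteq> []" by auto
    then have "last q \<in> T" using q(2) last_in_set by blast
    then obtain j where j: "j \<in> T" "j \<noteq> last q" "(last q, j) \<in> E" "u j \<noteq> 0"
      using nonzero_successor zero q(5) by blast
    then have "j \<notin> set q" using no_back_edge[OF q(2-4) j(3)] by blast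
    moreover have "walk E (q @ [j])"
      using \<open>q \<noteq> []\<close> q(4) j(3) by (simp add: successively_append_iff)
    ultimately show ?case using q j by (intro exI[of _ "q @ [j]"]) auto
  qed
  then obtain q where q: "length q = Suc (card T)" "set q \<subseteq> T" "distinct q" by blast
  then have "length q = card (set q)" by (simp add: distinct_card)
  also have "\<dots> \<le> card T" using q(2) by (intro card_mono) auto
  finally show False using q(1) by simp
qed

end

theorem mainTheorem1:
  fixes n m :: nat and E :: "(nat \<times> nat) set" and w :: "nat \<Rightarrow> nat \<Rightarrow> complex"
    and lam0 :: complex and u :: "nat \<Rightarrow> complex"
  assumes G: "wgraph n E w"
    and eig: "\<forall>i\<in>{1..n}. (\<Sum>j=1..n. w i j * u j) = lam0 * u i"
    and nz: "\<exists>i\<in>{1..n}. u i \<noteq> 0"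
    and S: "structural_set n E w lam0 {m+1..n}"
  shows "(\<exists>v :: nat \<Rightarrow> complex. (\<exists>i\<in>{m+1..n}. v i \<noteq> 0) \<and>
            (\<forall>i\<in>{m+1..n}. (\<Sum>j=m+1..n. reduced_entry E w {m+1..n} lam0 i j * v j) = lam0 * v i))
       \<and> (\<forall>i\<in>{m+1..n}. (\<Sum>j=m+1..n. reduced_entry E w {m+1..n} lam0 i j * u j) = lam0 * u i)"
proof -
  interpret structural_eigenvector n E w lam0 "{m+1..n}" u
    using G S eig by unfold_locales
  show ?thesis
    using reduced_eigen_equation eigenvector_nonzero_on_S[OF nz] by blast
qed

end
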